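(* Let $n\ge2$ be even and let $l<m$ be integers with $m-l\ge7$. Then only finitely many elements of $\mathrm{Tame}(\mathbf{k}^3)$ fix every vertex of the segment $\gamma[l,m]$.
   Context: Let $\mathbf{k}$ be a field of characteristic zero; $\mathrm{Tame}(\mathbf{k}^3)=\langle \mathrm{GL}_3(\mathbf{k})\ltimes\mathbf{k}^3,\ \{(x_1+P(x_2,x_3),x_2,x_3)\}\rangle$. For $r\in\{1,2,3\}$ a vertex of type $r$ is an orbit $[f_1,\dots,f_r]$, under post-composition by $\mathrm{GL}_r(\mathbf{k})\ltimes\mathbf{k}^r$, of the first $r$ components of an element $(f_1,f_2,f_3)\in\mathrm{Tame}(\mathbf{k}^3)$. $\mathcal{C}$ is the 2-dimensional simplicial complex on these vertices with triangles $[f_1],[f_1,f_2],[f_1,f_2,f_3]$ for $(f_1,f_2,f_3)\in\mathrm{Tame}(\mathbf{k}^3)$; $\mathrm{Tame}(\mathbf{k}^3)$ acts by $g\cdot[f_1,\dots,f_r]=[f_1\circ g^{-1},\dots,f_r\circ g^{-1}]$. Let $g^{-1}=(x_2,x_1+x_2x_3,x_3)$, $h^{-1}=(x_3,x_1,x_2)$, $f=g^n\circ h$. Define $\gamma\colon\mathbb{R}\to\mathcal{C}^1$ by $\gamma(0)=[x_1]$, $\gamma(1)=[x_1,x_3]$, $\gamma(2)=[x_3]$, $\gamma[0,2]$ the length 2 path through them, and $\gamma[2k,2k+2]=f^k\cdot\gamma[0,2]$ for $k\in\mathbb{Z}$; $\gamma[l,m]$ denotes the subpath with vertices $\gamma(l),\gamma(l+1),\dots,\gamma(m)$.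 *)

theory Defs
  imports "HOL-Analysis.Analysis"
begin

text \<open>Points of k^3 are vectors of type 'k^3; polynomial maps / automorphisms of k^3
  are represented by the functions they induce on points (faithful since char k = 0,
  so k is infinite).\<close>

inductive_set poly2 :: "('k::field_char_0 \<Rightarrow> 'k \<Rightarrow> 'k) set" where
  const: "(\<lambda>a b. c) \<in> poly2"
| var1: "(\<lambda>a b. a) \<in> poly2"
| var2: "(\<lambda>a b. b) \<in> poly2"
| add: "P \<in> poly2 \<Longrightarrow> Q \<in> poly2 \<Longrightarrow> (\<lambda>a b. P a b + Q a b) \<in> poly2"
| mult: "P \<in> poly2 \<Longrightarrow> Q \<in> poly2 \<Longrightarrow> (\<lambda>a b. P a b * Q a b) \<in> poly2"

definition x1 :: "'k::field_char_0^3 \<Rightarrow> 'k" where "x1 = (\<lambda>x. x $ 1)"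
definition x3 :: "'k::field_char_0^3 \<Rightarrow> 'k" where "x3 = (\<lambda>x. x $ 3)"

definition mk3 :: "'k::field_char_0 \<Rightarrow> 'k \<Rightarrow> 'k \<Rightarrow> 'k^3" where
  "mk3 a b c = vector [a, b, c]"

definition elementary :: "('k::field_char_0 \<Rightarrow> 'k \<Rightarrow> 'k) \<Rightarrow> 'k^3 \<Rightarrow> 'k^3" where
  "elementary P = (\<lambda>x. mk3 (x$1 + P (x$2) (x$3)) (x$2) (x$3))"

inductive_set tame :: "('k::field_char_0^3 \<Rightarrow> 'k^3) set" where
  affine: "invertible (A :: 'k^3^3) \<Longrightarrow> (\<lambda>x. A *v x + b) \<in> tame"
| elem: "P \<in> poly2 \<Longrightarrow> elementary P \<in> tame"
| comp: "f \<in> tame \<Longrightarrow> g \<in> tame \<Longrightarrow> f \<circ> g \<in> tame"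
| inverse: "f \<in> tame \<Longrightarrow> inv f \<in> tame"

definition GLr :: "nat \<Rightarrow> (nat \<Rightarrow> nat \<Rightarrow> 'k::field_char_0) \<Rightarrow> bool" where
  "GLr r A \<longleftrightarrow> (\<exists>B. \<forall>i<r. \<forall>k<r.
      (\<Sum>j<r. A i j * B j k) = (if i = k then 1 else 0) \<and>
      (\<Sum>j<r. B i j * A j k) = (if i = k then 1 else 0))"

definition vertex :: "('k::field_char_0^3 \<Rightarrow> 'k) list \<Rightarrow> ('k^3 \<Rightarrow> 'k) list set" where
  "vertex fs = {gs. length gs = length fs \<and>
     (\<exists>A b. GLr (length fs) A \<and>
        (\<forall>i<length fs. gs ! i = (\<lambda>x. (\<Sum>j<length fs. A i j * (fs ! j) x) + b i)))}"

definition act :: "('k::field_char_0^3 \<Rightarrow> 'k^3) \<Rightarrow> ('k^3 \<Rightarrow> 'k) list set \<Rightarrow> ('k^3 \<Rightarrow> 'k) list set" where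
  "act g V = (\<lambda>fs. map (\<lambda>c. c \<circ> inv g) fs) ` V"

definition g_inv :: "'k::field_char_0^3 \<Rightarrow> 'k^3" where
  "g_inv = (\<lambda>x. mk3 (x$2) (x$1 + x$2 * x$3) (x$3))"

definition h_inv :: "'k::field_char_0^3 \<Rightarrow> 'k^3" where
  "h_inv = (\<lambda>x. mk3 (x$3) (x$1) (x$2))"

definition gmap :: "'k::field_char_0^3 \<Rightarrow> 'k^3" where
  "gmap = inv g_inv"

definition hmap :: "'k::field_char_0^3 \<Rightarrow> 'k^3" where
  "hmap = inv h_inv"

definition fmap :: "nat \<Rightarrow> 'k::field_char_0^3 \<Rightarrow> 'k^3" where
  "fmap n = (gmap ^^ n) \<circ> hmap"

definition fpow :: "nat \<Rightarrow> int \<Rightarrow> 'k::field_char_0^3 \<Rightarrow> 'k^3" where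
  "fpow n k = (if 0 \<le> k then fmap n ^^ nat k else inv (fmap n) ^^ nat (- k))"

text \<open>The path gamma: gamma(2k) = f^k \<cdot> [x1], gamma(2k+1) = f^k \<cdot> [x1,x3]
  (and gamma(2k+2) = f^k \<cdot> [x3] = f^(k+1) \<cdot> [x1]).\<close>
definition gamma :: "nat \<Rightarrow> int \<Rightarrow> ('k::field_char_0^3 \<Rightarrow> 'k) list set" where
  "gamma n i = (if even i then act (fpow n (i div 2)) (vertex [x1])
                else act (fpow n (i div 2)) (vertex [x1, x3]))"

end

theory Submission
  imports Defs
begin

text \<open>
  Conjugating by a suitable power of f, a tame map fixing \<gamma>[l,m] becomes a polynomial automorphism
  \<psi> fixing the four vertices [x1], f[x1], f^2[x1], f^3[x1] (this is where m - l \<ge> 7 is used).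
  Since f^-1 (y) = (y3, F_n y1 + F_n+1 y2, F_n+1 y1 + F_n+2 y2) with Fibonacci-type polynomials
  F_k in y3, fixing these vertices means that the first coordinate of f^-k \<circ> \<psi> is an affine
  function of that of f^-k, for k = 0, ..., 3. For k = 0, 1 this makes \<psi>_1 and \<psi>_3 affine. For
  k = 2, comparing degrees in y3 (F_n+2 has degree n, F_n+1 is odd of degree n - 1) forces \<psi> to be
  linear and diagonal with \<psi>_3 = \<plusminus>y3; and k = 3, restricted to y3 = 0, shows that the
  coefficient of \<psi>_2 is \<plusminus>1 as well. So the map is one of four conjugates of diagonal sign maps.
\<close>

section \<open>Polynomial maps and tame automorphisms\<close>

lemma mk3_nth [simp]: "mk3 a b c $ 1 = a" "mk3 a b c $ 2 = b" "mk3 a b c $ 3 = c"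
  by (simp_all add: mk3_def)

lemma vec3_eq_iff: "(x::'a^3) = y \<longleftrightarrow> x$1 = y$1 \<and> x$2 = y$2 \<and> x$3 = y$3"
  by (simp add: vec_eq_iff forall_3)

lemma mk3_components: "mk3 (x$1) (x$2) (x$3) = x"
  by (simp add: vec3_eq_iff)

inductive_set polyfun :: "('k::field_char_0^3 \<Rightarrow> 'k) set" where
  const: "(\<lambda>x. c) \<in> polyfun"
| proj: "(\<lambda>x. x $ i) \<in> polyfun"
| add: "P \<in> polyfun \<Longrightarrow> Q \<in> polyfun \<Longrightarrow> (\<lambda>x. P x + Q x) \<in> polyfun"
| mult: "P \<in> polyfun \<Longrightarrow> Q \<in> polyfun \<Longrightarrow> (\<lambda>x. P x * Q x) \<in> polyfun"

definition polymap :: "('k::field_char_0^3 \<Rightarrow> 'k^3) \<Rightarrow> bool" where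
  "polymap g \<longleftrightarrow> (\<forall>i. (\<lambda>x. g x $ i) \<in> polyfun)"

lemma polyfun_on_line: "F \<in> polyfun \<Longrightarrow> \<exists>p. \<forall>t. F (mk3 a b t) = poly p t"
proof (induction rule: polyfun.induct)
  case (const c)
  show ?case by (rule exI[of _ "[:c:]"]) simp
next
  case (proj i)
  consider "i = 1" | "i = 2" | "i = 3" using exhaust_3 by blast
  then show ?case
  proof cases
    case 1 then show ?thesis by (intro exI[of _ "[:a:]"]) simp
  next
    case 2 then show ?thesis by (intro exI[of _ "[:b:]"]) simp
  next
    case 3 then show ?thesis by (intro exI[of _ "[:0, 1:]"]) simp
  qed
next
  case (add P Q)
  then obtain p q where "\<forall>t. P (mk3 a b t) = poly p t" "\<forall>t. Q (mk3 a b t) = poly q t" by blast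
  then show ?case by (intro exI[of _ "p + q"]) simp
next
  case (mult P Q)
  then obtain p q where "\<forall>t. P (mk3 a b t) = poly p t" "\<forall>t. Q (mk3 a b t) = poly q t" by blast
  then show ?case by (intro exI[of _ "p * q"]) simp
qed

lemma polyfun_comp: "F \<in> polyfun \<Longrightarrow> polymap g \<Longrightarrow> (\<lambda>x. F (g x)) \<in> polyfun"
  by (induction rule: polyfun.induct) (auto simp: polymap_def intro: polyfun.intros)

lemma polymap_comp: "polymap f \<Longrightarrow> polymap g \<Longrightarrow> polymap (f \<circ> g)"
  unfolding polymap_def by (auto intro: polyfun_comp[of "\<lambda>x. f x $ _" g, unfolded polymap_def])

lemma polyfun_sum: "(\<And>j. G j \<in> polyfun) \<Longrightarrow> (\<lambda>x. \<Sum>j\<in>S. G j x) \<in> polyfun"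
proof (induction S rule: infinite_finite_induct)
  case (infinite S)
  then show ?case using polyfun.const[of 0] by simp
next
  case empty
  then show ?case using polyfun.const[of 0] by simp
next
  case (insert j S)
  then show ?case using polyfun.add[of "G j" "\<lambda>x. \<Sum>j\<in>S. G j x"] by simp
qed

lemma polymap_affine: "polymap (\<lambda>x. (A::'k::field_char_0^3^3) *v x + b)"
  unfolding polymap_def
proof
  fix i
  have "(\<lambda>x. \<Sum>j\<in>UNIV. A$i$j * x$j) \<in> polyfun"
    by (rule polyfun_sum) (rule polyfun.mult[OF polyfun.const polyfun.proj])
  then show "(\<lambda>x. (A *v x + b) $ i) \<in> polyfun"
    unfolding matrix_vector_mult_def by (simp add: polyfun.add[OF _ polyfun.const])
qed

lemma poly2_polyfun: "P \<in> poly2 \<Longrightarrow> (\<lambda>x. P (x$2) (x$3)) \<in> polyfun"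
  by (induction rule: poly2.induct) (auto intro: polyfun.intros)

lemma polymap_elementary: "P \<in> poly2 \<Longrightarrow> polymap (elementary P)"
  unfolding polymap_def
proof
  fix i :: 3
  assume P: "P \<in> poly2"
  consider "i = 1" | "i = 2" | "i = 3" using exhaust_3 by blast
  then show "(\<lambda>x. elementary P x $ i) \<in> polyfun"
    by cases (auto simp: elementary_def intro: polyfun.intros poly2_polyfun[OF P])
qed

lemma affine_bij_inv:
  assumes "invertible (A :: 'k::field_char_0^3^3)"
  obtains A' c where "bij (\<lambda>x. A *v x + b)" "inv (\<lambda>x. A *v x + b) = (\<lambda>y. A' *v y + c)"
proof -
  obtain A' where A': "A ** A' = mat 1" "A' ** A = mat 1"
    using assms unfolding invertible_def by blast
  let ?f = "\<lambda>x. A *v x + b" and ?g = "\<lambda>y. A' *v y + - (A' *v b)"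
  have "?f \<circ> ?g = id" "?g \<circ> ?f = id"
    using A' by (simp_all add: fun_eq_iff matrix_vector_right_distrib matrix_vector_mult_diff_distrib
        matrix_vector_mul_assoc)
  then have "bij ?f" "inv ?f = ?g"
    by (auto intro: o_bij inv_unique_comp)
  then show thesis by (rule that)
qed

lemma inv_elementary: "inv (elementary P) = elementary (\<lambda>a b. - P a b)" "bij (elementary P)"
proof -
  have "elementary P \<circ> elementary (\<lambda>a b. - P a b) = id" "elementary (\<lambda>a b. - P a b) \<circ> elementary P = id"
    by (simp_all add: fun_eq_iff elementary_def vec3_eq_iff)
  then show "inv (elementary P) = elementary (\<lambda>a b. - P a b)" "bij (elementary P)"
    by (auto intro: o_bij inv_unique_comp)
qed

lemma tame_bij_polymap: "f \<in> tame \<Longrightarrow> bij f \<and> polymap f \<and> polymap (inv f)"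
proof (induction rule: tame.induct)
  case (affine A b)
  then obtain A' c where "bij (\<lambda>x. A *v x + b)" "inv (\<lambda>x. A *v x + b) = (\<lambda>y. A' *v y + c)"
    by (rule affine_bij_inv)
  then show ?case using polymap_affine[of A b] polymap_affine[of A' c] by simp
next
  case (elem P)
  have "(\<lambda>a b. - P a b) \<in> poly2"
    using poly2.mult[OF poly2.const[of "-1"] elem] by simp
  then show ?case using inv_elementary polymap_elementary elem by metis
next
  case (comp f g)
  then have "bij (f \<circ> g)" "inv (f \<circ> g) = inv g \<circ> inv f"
    by (simp_all add: bij_comp o_inv_distrib)
  then show ?case using comp.IH polymap_comp by metis
next
  case (inverse f)
  then show ?case by (simp add: bij_imp_bij_inv inv_inv_eq)
qed

lemma tame_bij: "f \<in> tame \<Longrightarrow> bij f"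
  using tame_bij_polymap by blast

lemma tame_polymap: "f \<in> tame \<Longrightarrow> polymap f"
  using tame_bij_polymap by blast

section \<open>Polynomial lemmas and Fibonacci polynomials\<close>

lemma degree_mult_less_imp_zero:
  fixes r p :: "'a::idom poly"
  assumes "degree (r * p) < degree p"
  shows "r * p = 0"
proof (rule ccontr)
  assume "r * p \<noteq> 0"
  then have "degree (r * p) = degree r + degree p"
    by (simp add: degree_mult_eq)
  with assms show False by simp
qed

lemma poly_periodic_imp_degree_0:
  fixes p :: "'a::field_char_0 poly"
  assumes periodic: "\<And>u. poly p (u + \<tau>) = poly p u" and "\<tau> \<noteq> 0"
  shows "degree p = 0"
proof -
  have "poly p (of_nat m * \<tau>) = poly p 0" for m
    by (induction m) (simp_all add: algebra_simps periodic[of "of_nat _ * \<tau>", simplified algebra_simps])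
  then have "range (\<lambda>m::nat. of_nat m * \<tau>) \<subseteq> {u. poly (p - [:poly p 0:]) u = 0}"
    by auto
  moreover have "infinite (range (\<lambda>m::nat. of_nat m * \<tau>))"
    using \<open>\<tau> \<noteq> 0\<close> by (intro range_inj_infinite injI) simp
  ultimately have "p - [:poly p 0:] = 0"
    using poly_roots_finite finite_subset by blast
  then show ?thesis
    by (metis degree_pCons_0 eq_iff_diff_eq_0)
qed

lemma scaling_invariant_poly:
  fixes p :: "'a::field poly"
  assumes inv: "smult \<kappa> (pcompose p [:0, e:]) = smult c p"
    and "coeff p i \<noteq> 0" "coeff p (i + 2) \<noteq> 0" "\<kappa> \<noteq> 0" "e \<noteq> 0"
  shows "e^2 = 1 \<and> \<kappa> * e^(i + 2) = c"
proof -
  have coeff_inv: "\<kappa> * e^j = c" if "coeff p j \<noteq> 0" for j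
    using arg_cong[OF inv, of "\<lambda>p. coeff p j"] that by (simp add: coeff_pcompose_linear)
  have "\<kappa> * e^i * e^2 = \<kappa> * e^(i + 2)"
    by (simp add: power_add power2_eq_square mult.assoc)
  also have "\<dots> = \<kappa> * e^i * 1"
    using coeff_inv[of i] coeff_inv[of "i + 2"] assms by simp
  finally have "e^2 = 1"
    using assms by simp
  with coeff_inv[of "i + 2"] assms show ?thesis by simp
qed

text \<open>
  fib_poly k is the Fibonacci polynomial F_(k-1), with F_(-1) = 1; these are the entries of
  [[0, 1], [1, t]]^k = [[fib_poly k, fib_poly (k+1)], [fib_poly (k+1), fib_poly (k+2)]], the
  action of g^-n on (x1, x2) for fixed x3 = t.
\<close>

fun fib_poly :: "nat \<Rightarrow> 'a::comm_ring_1 poly" where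
  "fib_poly 0 = 1"
| "fib_poly (Suc 0) = 0"
| "fib_poly (Suc (Suc k)) = pCons 0 (fib_poly (Suc k)) + fib_poly k"

declare fib_poly.simps(3) [simp del]

lemma coeff_fib_poly_Suc_Suc:
  "coeff (fib_poly (Suc (Suc k))) i = (if i = 0 then 0 else coeff (fib_poly (Suc k)) (i - 1)) + coeff (fib_poly k) i"
  by (cases i) (simp_all add: fib_poly.simps(3))

lemma coeff_fib_poly_eq_0:
  "k < i + 2 \<Longrightarrow> coeff (fib_poly k :: 'a::comm_ring_1 poly) i = (if i = 0 \<and> k = 0 then 1 else 0)"
proof (induction k arbitrary: i rule: fib_poly.induct)
  case (3 k)
  then obtain j where "i = Suc j" by (cases i) auto
  with 3 show ?case by (simp add: fib_poly.simps(3))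
qed auto

lemma coeff_fib_poly_top: "coeff (fib_poly (k + 2) :: 'a::comm_ring_1 poly) k = 1"
proof (induction k)
  case (Suc k)
  then show ?case
    by (simp add: numeral_2_eq_2 coeff_fib_poly_Suc_Suc coeff_fib_poly_eq_0)
qed (simp add: numeral_2_eq_2 fib_poly.simps(3))

lemma coeff_fib_poly_subtop: "coeff (fib_poly (k + 4) :: 'a::comm_ring_1 poly) k = of_nat (k + 1)"
proof (induction k)
  case 0
  then show ?case by (simp add: numeral_eq_Suc fib_poly.simps(3))
next
  case (Suc k)
  have "coeff (fib_poly (Suc k + 4) :: 'a poly) (Suc k)
      = coeff (fib_poly (k + 4)) k + coeff (fib_poly (Suc k + 2)) (Suc k)"
    by (simp add: numeral_eq_Suc coeff_fib_poly_Suc_Suc)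
  also have "coeff (fib_poly (Suc k + 2) :: 'a poly) (Suc k) = 1"
    by (rule coeff_fib_poly_top)
  finally show ?case
    using Suc by simp
qed

lemma degree_fib_poly: "degree (fib_poly (k + 2) :: 'a::comm_ring_1 poly) = k"
proof (rule antisym)
  show "degree (fib_poly (k + 2) :: 'a poly) \<le> k"
    by (rule degree_le) (simp add: coeff_fib_poly_eq_0)
  show "k \<le> degree (fib_poly (k + 2) :: 'a poly)"
    by (rule le_degree) (metis coeff_fib_poly_top one_neq_zero)
qed

lemma poly_fib_poly_minus: "poly (fib_poly k) (- t) = (-1)^k * poly (fib_poly k) (t::'a::comm_ring_1)"
  by (induction k rule: fib_poly.induct) (simp_all add: fib_poly.simps(3) algebra_simps)

lemma poly_fib_poly_even_0: "poly (fib_poly (2 * m)) 0 = (1::'a::comm_ring_1)"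
  by (induction m) (simp_all add: fib_poly.simps(3) poly_0_coeff_0)

lemma poly_fib_poly_odd_0: "odd k \<Longrightarrow> poly (fib_poly k) 0 = (0::'a::field_char_0)"
  using poly_fib_poly_minus[of k "0::'a"] by simp

lemma scaling_invariant_fib_poly:
  fixes \<kappa> c e :: "'a::field_char_0"
  assumes "n \<ge> 2" "smult \<kappa> (pcompose (fib_poly (n + 2)) [:0, e:]) = smult c (fib_poly (n + 2))"
    and "\<kappa> \<noteq> 0" "e \<noteq> 0"
  shows "e^2 = 1 \<and> \<kappa> * e^n = c"
proof -
  obtain i where n: "n = i + 2" using \<open>n \<ge> 2\<close> by (metis add.commute le_iff_add)
  have "n + 2 = i + 4"
    using n by simp
  then have "coeff (fib_poly (n + 2) :: 'a poly) i = of_nat (Suc i)"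
    by (simp only: coeff_fib_poly_subtop Suc_eq_plus1)
  then have "coeff (fib_poly (n + 2) :: 'a poly) i \<noteq> 0"
    by (metis of_nat_neq_0)
  moreover have "coeff (fib_poly (n + 2) :: 'a poly) (i + 2) = 1"
    unfolding n by (rule coeff_fib_poly_top)
  ultimately show ?thesis
    using scaling_invariant_poly[OF assms(2) _ _ assms(3,4), of i] n by simp
qed

section \<open>The map f and its integer powers\<close>

definition finv :: "nat \<Rightarrow> 'k::field_char_0^3 \<Rightarrow> 'k^3" where
  "finv n y = mk3 (y$3)
     (poly (fib_poly n) (y$3) * y$1 + poly (fib_poly (n + 1)) (y$3) * y$2)
     (poly (fib_poly (n + 1)) (y$3) * y$1 + poly (fib_poly (n + 2)) (y$3) * y$2)"

lemma finv_nth_1 [simp]: "finv n y $ 1 = y $ 3"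
  by (simp add: finv_def)

lemma funpow_g_inv: "(g_inv ^^ n) x = mk3
     (poly (fib_poly n) (x$3) * x$1 + poly (fib_poly (n + 1)) (x$3) * x$2)
     (poly (fib_poly (n + 1)) (x$3) * x$1 + poly (fib_poly (n + 2)) (x$3) * x$2) (x$3)"
  by (induction n) (simp_all add: fib_poly.simps(3) mk3_components g_inv_def vec3_eq_iff algebra_simps)

lemma finv_eq_comp: "finv n = h_inv \<circ> g_inv ^^ n"
  by (simp add: fun_eq_iff finv_def h_inv_def funpow_g_inv)

lemma h_inv_tame: "h_inv \<in> tame"
proof -
  let ?H = "vector [vector [0, 0, 1], vector [1, 0, 0], vector [0, 1, 0]] :: 'a::field_char_0^3^3"
  have "invertible ?H"
    by (simp add: invertible_det_nz det_3)
  then have "(\<lambda>x. ?H *v x + 0) \<in> tame"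
    by (rule tame.affine)
  moreover have "(\<lambda>x. ?H *v x + 0) = h_inv"
    by (simp add: fun_eq_iff h_inv_def vec3_eq_iff matrix_vector_mult_def sum_3)
  ultimately show ?thesis by simp
qed

lemma g_inv_tame: "g_inv \<in> tame"
proof -
  let ?S = "vector [vector [0, 1, 0], vector [1, 0, 0], vector [0, 0, 1]] :: 'a::field_char_0^3^3"
  have "invertible ?S"
    by (simp add: invertible_det_nz det_3)
  then have "(\<lambda>x. ?S *v x + 0) \<in> tame"
    by (rule tame.affine)
  moreover have "elementary (\<lambda>a b. a * b) \<in> tame"
    by (intro tame.elem poly2.mult poly2.var1 poly2.var2)
  ultimately have "(\<lambda>x. ?S *v x + 0) \<circ> elementary (\<lambda>a b. a * b) \<in> tame"
    by (rule tame.comp)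
  moreover have "(\<lambda>x. ?S *v x + 0) \<circ> elementary (\<lambda>a b. a * b) = g_inv"
    by (simp add: fun_eq_iff g_inv_def elementary_def vec3_eq_iff matrix_vector_mult_def sum_3)
  ultimately show ?thesis by simp
qed

lemma id_tame: "id \<in> tame"
proof -
  have "(\<lambda>x. mat 1 *v x + 0) \<in> (tame :: ('a::field_char_0^3 \<Rightarrow> 'a^3) set)"
    by (rule tame.affine) (auto simp: invertible_def)
  then show ?thesis by (simp add: id_def)
qed

lemma funpow_tame: "f \<in> tame \<Longrightarrow> f ^^ k \<in> tame"
  by (induction k) (simp_all add: id_tame tame.comp)

lemma fmap_tame: "fmap n \<in> tame"
  unfolding fmap_def gmap_def hmap_def
  by (intro tame.comp funpow_tame tame.inverse g_inv_tame h_inv_tame)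

lemma inv_fmap: "inv (fmap n) = (finv n :: 'a::field_char_0^3 \<Rightarrow> 'a^3)"
proof -
  have g: "bij (g_inv :: 'a^3 \<Rightarrow> 'a^3)" and h: "bij (h_inv :: 'a^3 \<Rightarrow> 'a^3)"
    using tame_bij g_inv_tame h_inv_tame by blast+
  then have gm: "bij (gmap :: 'a^3 \<Rightarrow> 'a^3)" and hm: "bij (hmap :: 'a^3 \<Rightarrow> 'a^3)"
    unfolding gmap_def hmap_def using bij_imp_bij_inv by blast+
  have "inv (fmap n :: 'a^3 \<Rightarrow> 'a^3) = inv hmap \<circ> inv (gmap ^^ n)"
    unfolding fmap_def by (rule o_inv_distrib[OF bij_fn[OF gm] hm])
  also have "\<dots> = inv hmap \<circ> inv gmap ^^ n"
    by (simp only: inv_fn[OF gm])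
  also have "\<dots> = finv n"
    using g h by (simp add: gmap_def hmap_def inv_inv_eq finv_eq_comp)
  finally show ?thesis .
qed

definition ipow :: "('a \<Rightarrow> 'a) \<Rightarrow> int \<Rightarrow> 'a \<Rightarrow> 'a" where
  "ipow F j = (if 0 \<le> j then F ^^ nat j else inv F ^^ nat (- j))"

lemma fpow_eq_ipow: "fpow n j = ipow (fmap n) j"
  by (simp add: fpow_def ipow_def)

lemma ipow_plus_1: "bij F \<Longrightarrow> ipow F (j + 1) = ipow F j \<circ> F"
proof (cases "0 \<le> j")
  case True
  then have "nat (j + 1) = Suc (nat j)" by simp
  with True show ?thesis
    by (simp add: ipow_def funpow_Suc_right del: funpow.simps)
next
  case False
  assume "bij F"
  have "ipow F (j + 1) = inv F ^^ nat (- (j + 1))"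
    using False by (simp add: ipow_def)
  moreover have "nat (- j) = Suc (nat (- (j + 1)))"
    using False by simp
  then have "ipow F j = inv F ^^ nat (- (j + 1)) \<circ> inv F"
    using False by (simp add: ipow_def funpow_Suc_right del: funpow.simps)
  moreover have "inv F \<circ> F = id"
    using \<open>bij F\<close> by (simp add: bij_is_inj inv_o_cancel)
  ultimately show ?thesis
    by (simp add: comp_assoc)
qed

lemma ipow_add_nat: "bij F \<Longrightarrow> ipow F (j + int k) = ipow F j \<circ> F ^^ k"
proof (induction k)
  case (Suc k)
  have "ipow F (j + int (Suc k)) = ipow F (j + int k) \<circ> F"
    using ipow_plus_1[OF Suc.prems, of "j + int k"] by (simp add: algebra_simps)
  with Suc show ?case
    by (simp add: funpow_Suc_right comp_assoc del: funpow.simps)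
qed simp

lemma ipow_tame: "F \<in> tame \<Longrightarrow> ipow F j \<in> tame"
  by (simp add: ipow_def funpow_tame tame.inverse)

section \<open>Maps fixing the vertices f^k [x1]\<close>

lemma vertex_x1_elem: "[x1] \<in> vertex [x1]"
proof -
  have "GLr 1 (\<lambda>i j. 1 :: 'a::field_char_0)"
    unfolding GLr_def by (rule exI[of _ "\<lambda>i j. 1"]) simp
  then show ?thesis
    unfolding vertex_def by (intro CollectI conjI exI[of _ "\<lambda>i j. 1 :: 'a"] exI[of _ "\<lambda>i. 0 :: 'a"]) auto
qed

lemma vertex_singleton_elem:
  assumes "gs \<in> vertex [u]"
  obtains \<alpha> \<beta> where "\<alpha> \<noteq> 0" "gs = [\<lambda>x. \<alpha> * u x + \<beta>]"
proof -
  from assms obtain A b where len: "length gs = 1" and "GLr 1 A"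
    and gs: "\<forall>i<1. gs ! i = (\<lambda>x. (\<Sum>j<1. A i j * ([u] ! j) x) + b i)"
    unfolding vertex_def by auto
  then obtain B where "A 0 0 * B 0 0 = 1"
    unfolding GLr_def by fastforce
  then have "A 0 0 \<noteq> 0" by auto
  moreover have "gs = [\<lambda>x. A 0 0 * u x + b 0]"
    using len gs by (cases gs) auto
  ultimately show thesis by (rule that)
qed

lemma act_fixes_vertex_x1:
  assumes "act \<phi> (act G (vertex [x1])) = act G (vertex [x1])"
  obtains \<alpha> \<beta> where "\<alpha> \<noteq> 0" "\<And>x. inv G (inv \<phi> x) $ 1 = \<alpha> * inv G x $ 1 + \<beta>"
proof -
  have "[x1 \<circ> inv G \<circ> inv \<phi>] \<in> act \<phi> (act G (vertex [x1]))"
    unfolding act_def using vertex_x1_elem by force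
  then obtain gs where gs: "gs \<in> vertex [x1]" and "[x1 \<circ> inv G \<circ> inv \<phi>] = map (\<lambda>c. c \<circ> inv G) gs"
    using assms unfolding act_def by auto
  moreover obtain \<alpha> \<beta> where "\<alpha> \<noteq> 0" "gs = [\<lambda>x. \<alpha> * x1 x + \<beta>]"
    using vertex_singleton_elem[OF gs] .
  ultimately show thesis
    by (intro that[of \<alpha> \<beta>]) (simp_all add: fun_eq_iff x1_def)
qed

definition diag3 :: "'k \<Rightarrow> 'k \<Rightarrow> 'k \<Rightarrow> 'k::field_char_0^3 \<Rightarrow> 'k^3" where
  "diag3 \<alpha> \<beta> \<gamma> y = mk3 (\<alpha> * y$1) (\<beta> * y$2) (\<gamma> * y$3)"

text \<open>
  The relations imposed on \<psi> by fixing [x1], f[x1] and f^2[x1]; \<psi> will turn out to be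
  diag3 a c e, so b, d and \<delta> vanish.
\<close>

locale stabiliser_relations =
  fixes n :: nat and \<psi> :: "'k::field_char_0^3 \<Rightarrow> 'k^3" and a b c d e \<delta> :: 'k
  assumes n_ge_2: "n \<ge> 2" and n_even: "even n" and polymap_\<psi>: "polymap \<psi>"
    and a_nonzero: "a \<noteq> 0" and c_nonzero: "c \<noteq> 0" and e_nonzero: "e \<noteq> 0"
    and coord1: "\<And>y. \<psi> y $ 1 = a * y$1 + b"
    and coord3: "\<And>y. \<psi> y $ 3 = e * y$3 + \<delta>"
    and finv_coord3: "\<And>y. finv n (\<psi> y) $ 3 = c * finv n y $ 3 + d"
begin

abbreviation B :: "'k poly" where "B \<equiv> fib_poly (n + 1)"
abbreviation C :: "'k poly" where "C \<equiv> fib_poly (n + 2)"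

definition Bs :: "'k poly" where "Bs = pcompose B [:\<delta>, e:]"
definition Cs :: "'k poly" where "Cs = pcompose C [:\<delta>, e:]"

lemma degree_B: "degree B = n - 1"
  using degree_fib_poly[of "n - 1", where 'a='k] n_ge_2 by simp

lemma degree_Bs: "degree Bs = n - 1"
  using degree_B e_nonzero by (simp add: Bs_def degree_pcompose)

lemma degree_Cs: "degree Cs = n"
  using degree_fib_poly[of n, where 'a='k] e_nonzero by (simp add: Cs_def degree_pcompose)

lemma slice_relation:
  "\<exists>R. (\<forall>t. \<psi> (mk3 r s t) $ 2 = poly R t) \<and>
       R * Cs = smult (c * r) B + smult (c * s) C + [:d:] - smult (a * r + b) Bs"
proof -
  obtain R where R: "\<forall>t. \<psi> (mk3 r s t) $ 2 = poly R t"
    using polymap_\<psi> polyfun_on_line unfolding polymap_def by blast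
  have "poly (R * Cs) t = poly (smult (c * r) B + smult (c * s) C + [:d:] - smult (a * r + b) Bs) t" for t
    using finv_coord3[of "mk3 r s t"] R coord1[of "mk3 r s t"] coord3[of "mk3 r s t"]
    by (simp add: finv_def Bs_def Cs_def poly_pcompose algebra_simps)
  then have "R * Cs = smult (c * r) B + smult (c * s) C + [:d:] - smult (a * r + b) Bs"
    by (rule poly_ext)
  with R show ?thesis by blast
qed

lemma x2_free_relation: "smult (c * r) B + [:d:] = smult (a * r + b) Bs"
proof -
  obtain R where R: "R * Cs = smult (c * r) B + [:d:] - smult (a * r + b) Bs"
    using slice_relation[of r 0] by auto
  have "degree (smult (c * r) B + [:d:] - smult (a * r + b) Bs) \<le> n - 1"
    using degree_B degree_Bs n_ge_2
    by (intro degree_diff_le degree_add_le) (auto intro: order.trans[OF degree_smult_le])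
  then have "degree (R * Cs) < degree Cs"
    using R degree_Cs n_ge_2 by simp
  then have "R * Cs = 0"
    by (rule degree_mult_less_imp_zero)
  with R show ?thesis by simp
qed

lemma b_zero: "b = 0" and d_zero: "d = 0"
proof -
  have eq: "[:d:] = smult b Bs"
    using x2_free_relation[of 0] by simp
  show "b = 0"
  proof (rule ccontr)
    assume "b \<noteq> 0"
    then have "n - 1 = degree (smult b Bs)"
      by (simp add: degree_Bs)
    also have "\<dots> = 0"
      by (simp flip: eq)
    finally show False
      using n_ge_2 by simp
  qed
  with eq show "d = 0" by simp
qed

lemma B_relation: "smult c B = smult a Bs"
  using x2_free_relation[of 1] by (simp add: b_zero d_zero)

lemma \<delta>_zero: "\<delta> = 0"
proof -
  \<comment> \<open>B is odd and, by B_relation, proportional to B(e t + \<delta>); together these make B 2\<delta>-periodic.\<close>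
  have B_affine: "c * poly B t = a * poly B (e * t + \<delta>)" for t
    using arg_cong[OF B_relation, of "\<lambda>p. poly p t"] by (simp add: Bs_def poly_pcompose algebra_simps)
  have B_odd: "poly B (- t) = - poly B t" for t
    using poly_fib_poly_minus[of "n + 1" t] n_even by simp
  have "poly B (u + 2 * \<delta>) = poly B u" for u
  proof -
    define t where "t = - (u + \<delta>) / e"
    have t1: "e * t + \<delta> = - u" and t2: "e * (- t) + \<delta> = u + 2 * \<delta>"
      using e_nonzero by (simp_all add: t_def field_simps)
    have "a * poly B (u + 2 * \<delta>) = c * poly B (- t)"
      using B_affine[of "- t", unfolded t2] by simp
    also have "\<dots> = - (c * poly B t)"
      using B_odd[of t] by simp
    also have "\<dots> = a * poly B u"
      using B_affine[of t, unfolded t1] B_odd[of u] by simp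
    finally have "a * poly B (u + 2 * \<delta>) = a * poly B u" .
    with a_nonzero show ?thesis by simp
  qed
  moreover have "degree B \<noteq> 0"
    using degree_B n_ge_2 by simp
  ultimately show ?thesis
    using poly_periodic_imp_degree_0[of B "2 * \<delta>"] by auto
qed

lemma Bs_Cs_eq: "Bs = pcompose B [:0, e:]" "Cs = pcompose C [:0, e:]"
  unfolding Bs_def Cs_def using \<delta>_zero by simp_all

lemma e_square_and_Cs_eq_C: "e^2 = 1 \<and> Cs = C"
proof -
  obtain R where R: "R * Cs = smult c C"
    using slice_relation[of 0 1] by (auto simp: b_zero d_zero)
  have C_nonzero: "C \<noteq> 0" and Cs_nonzero: "Cs \<noteq> 0"
    using degree_Cs degree_fib_poly[of n, where 'a='k] n_ge_2 by auto
  then have "R \<noteq> 0"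
    using R c_nonzero by auto
  then have "degree R = 0"
    using arg_cong[OF R, of degree] degree_mult_eq[OF _ Cs_nonzero] degree_Cs degree_fib_poly[of n, where 'a='k] c_nonzero
    by simp
  then obtain \<kappa> where \<kappa>: "R = [:\<kappa>:]" "\<kappa> \<noteq> 0"
    using \<open>R \<noteq> 0\<close> by (metis degree_0_id pCons_eq_0_iff)
  then have scaling: "smult \<kappa> (pcompose C [:0, e:]) = smult c C"
    using R by (simp add: Bs_Cs_eq)
  then have "e^2 = 1" "\<kappa> * e^n = c"
    using scaling_invariant_fib_poly[OF n_ge_2 scaling \<kappa>(2) e_nonzero] by simp_all
  moreover have "e^n = 1"
  proof -
    obtain m where "n = 2 * m"
      using n_even by blast
    with \<open>e^2 = 1\<close> show ?thesis
      by (simp add: power_mult)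
  qed
  ultimately have "smult c Cs = smult c C"
    using scaling by (simp add: Bs_Cs_eq)
  with \<open>e^2 = 1\<close> show ?thesis
    using smult_cancel[OF c_nonzero] by blast
qed

lemma c_eq: "c = a * e"
proof -
  have "c = a * e^(n - 1)"
    using arg_cong[OF B_relation, of "\<lambda>p. coeff p (n - 1)"] coeff_fib_poly_top[of "n - 1", where 'a='k] n_ge_2
    by (simp add: Bs_Cs_eq coeff_pcompose_linear)
  moreover have "e^(n - 1) = e"
  proof -
    obtain m where "n = 2 * m"
      using n_even by blast
    with n_ge_2 have "n - 1 = Suc (2 * (m - 1))"
      by simp
    then show ?thesis
      using e_square_and_Cs_eq_C by (simp add: power_mult)
  qed
  ultimately show ?thesis by simp
qed

lemma coord2_on_line: "\<psi> (mk3 r s t) $ 2 = c * s"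
proof -
  obtain R where R: "\<forall>t. \<psi> (mk3 r s t) $ 2 = poly R t"
    and eq: "R * Cs = smult (c * r) B + smult (c * s) C + [:d:] - smult (a * r + b) Bs"
    using slice_relation by blast
  have "smult (a * r) Bs = smult (c * r) B"
    using B_relation by (metis mult.commute smult_smult)
  with eq have "R * C = [:c * s:] * C"
    using e_square_and_Cs_eq_C by (simp add: b_zero d_zero)
  moreover have "C \<noteq> 0"
    using degree_fib_poly[of n, where 'a='k] n_ge_2 by auto
  ultimately have "R = [:c * s:]"
    by (metis mult_cancel_right)
  then show ?thesis
    using R by simp
qed

lemma coord2: "\<psi> y $ 2 = c * y$2"
  using coord2_on_line[of "y$1" "y$2" "y$3"] by (simp add: mk3_components)

lemma \<psi>_eq_diag3: "\<psi> = diag3 a c e"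
  using coord1 coord2 coord3 by (simp add: fun_eq_iff diag3_def vec3_eq_iff b_zero \<delta>_zero)

end

lemma finv3_on_plane:
  assumes "even n"
  shows "(finv n ^^ 3) (mk3 r s 0) $ 1 = poly (fib_poly (n + 2)) s * (r :: 'k::field_char_0)"
proof -
  obtain m where n: "n = 2 * m" using assms by blast
  have "poly (fib_poly n) 0 = (1::'k)" "poly (fib_poly (n + 1)) 0 = (0::'k)" "poly (fib_poly (n + 2)) 0 = (1::'k)"
    using poly_fib_poly_even_0[of m] poly_fib_poly_even_0[of "m + 1"] poly_fib_poly_odd_0[of "n + 1"] assms n
    by simp_all
  then show ?thesis
    by (simp add: numeral_3_eq_3 finv_def)
qed

lemma finv3_relation_diag3_sign:
  fixes a c e :: "'k::field_char_0"
  assumes "n \<ge> 2" "even n" "a \<noteq> 0" "c \<noteq> 0"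
    and relation: "\<And>y. (finv n ^^ 3) (diag3 a c e y) $ 1 = c' * (finv n ^^ 3) y $ 1 + d'"
  shows "c^2 = 1"
proof -
  have plane: "poly (fib_poly (n + 2)) (c * s) * (a * r) = c' * (poly (fib_poly (n + 2)) s * r) + d'" for r s
    using relation[of "mk3 r s 0"] finv3_on_plane[OF \<open>even n\<close>, where 'k='k] by (simp add: diag3_def)
  then have "d' = 0"
    using plane[of 0 0] by simp
  then have "poly (smult a (pcompose (fib_poly (n + 2)) [:0, c:])) s = poly (smult c' (fib_poly (n + 2))) s" for s
    using plane[where r = 1 and s = s] by (simp add: poly_pcompose algebra_simps)
  then have "smult a (pcompose (fib_poly (n + 2)) [:0, c:]) = smult c' (fib_poly (n + 2))"
    by (rule poly_ext)
  then show ?thesis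
    using scaling_invariant_fib_poly assms by blast
qed

lemma stabiliser_of_four_vertices:
  fixes \<psi> :: "'k::field_char_0^3 \<Rightarrow> 'k^3"
  assumes "n \<ge> 2" "even n" "polymap \<psi>"
    and relation: "\<And>k. k < 4 \<Longrightarrow> \<exists>\<alpha> \<beta>. \<alpha> \<noteq> 0 \<and> (\<forall>y. (finv n ^^ k) (\<psi> y) $ 1 = \<alpha> * (finv n ^^ k) y $ 1 + \<beta>)"
  shows "\<exists>c e. c \<in> {1, -1} \<and> e \<in> {1, -1} \<and> \<psi> = diag3 (c * e) c e"
proof -
  obtain a b where "a \<noteq> 0" "\<And>y. \<psi> y $ 1 = a * y$1 + b"
    using relation[of 0] by auto
  moreover obtain e \<delta> where "e \<noteq> 0" "\<And>y. \<psi> y $ 3 = e * y$3 + \<delta>"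
    using relation[of 1] by auto
  moreover obtain c d where "c \<noteq> 0" "\<And>y. finv n (\<psi> y) $ 3 = c * finv n y $ 3 + d"
    using relation[of 2] by (auto simp: numeral_2_eq_2)
  ultimately interpret stabiliser_relations n \<psi> a b c d e \<delta>
    using assms by unfold_locales auto
  obtain c' d' where "\<And>y. (finv n ^^ 3) (diag3 a c e y) $ 1 = c' * (finv n ^^ 3) y $ 1 + d'"
    using relation[of 3] \<psi>_eq_diag3 by auto
  then have "c^2 = 1"
    using finv3_relation_diag3_sign assms a_nonzero c_nonzero by blast
  moreover have "e^2 = 1"
    using e_square_and_Cs_eq_C by simp
  moreover have "\<psi> = diag3 (c * e) c e"
    using \<psi>_eq_diag3 c_eq \<open>e^2 = 1\<close> by (simp add: power2_eq_square mult.assoc)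
  ultimately show ?thesis
    by (auto simp: power2_eq_1_iff)
qed

section \<open>The stabiliser of a segment of \<gamma>\<close>

lemma fpow_bij: "bij (fpow n j)"
  unfolding fpow_eq_ipow by (intro tame_bij ipow_tame fmap_tame)

lemma inv_fpow_add_nat: "inv (fpow n (j + int k)) = finv n ^^ k \<circ> inv (fpow n j)"
proof -
  have F: "bij (fmap n)"
    by (rule tame_bij[OF fmap_tame])
  have "inv (fpow n (j + int k)) = inv (fmap n ^^ k) \<circ> inv (fpow n j)"
    unfolding fpow_eq_ipow ipow_add_nat[OF F]
    by (rule o_inv_distrib[OF fpow_bij[unfolded fpow_eq_ipow] bij_fn[OF F]])
  then show ?thesis
    by (simp add: inv_fn[OF F] inv_fmap)
qed

lemma conjugate_fixing_even_vertex:
  fixes \<phi> :: "'k::field_char_0^3 \<Rightarrow> 'k^3"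
  assumes "act \<phi> (gamma n (2 * (j + int k))) = gamma n (2 * (j + int k))"
  shows "\<exists>\<alpha> \<beta>. \<alpha> \<noteq> 0 \<and>
    (\<forall>y. (finv n ^^ k) ((inv (fpow n j) \<circ> inv \<phi> \<circ> fpow n j) y) $ 1 = \<alpha> * (finv n ^^ k) y $ 1 + \<beta>)"
proof -
  have "act \<phi> (act (fpow n (j + int k)) (vertex [x1])) = act (fpow n (j + int k)) (vertex [x1])"
    using assms by (simp add: gamma_def)
  then obtain \<alpha> \<beta> where "\<alpha> \<noteq> 0"
    and fixed: "\<And>x. inv (fpow n (j + int k)) (inv \<phi> x) $ 1 = \<alpha> * inv (fpow n (j + int k)) x $ 1 + \<beta>"
    by (rule act_fixes_vertex_x1) (rule that)
  have "inv (fpow n j) (fpow n j y) = y" for y :: "'k^3"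
    by (simp add: bij_is_inj[OF fpow_bij])
  then have "(finv n ^^ k) ((inv (fpow n j) \<circ> inv \<phi> \<circ> fpow n j) y) $ 1 = \<alpha> * (finv n ^^ k) y $ 1 + \<beta>" for y
    using fixed[of "fpow n j y"] by (simp add: inv_fpow_add_nat)
  with \<open>\<alpha> \<noteq> 0\<close> show ?thesis by blast
qed

lemma segment_stabiliser_subset:
  assumes "n \<ge> 2" "even n" "m - l \<ge> 7"
  defines "P \<equiv> fpow n ((l + 1) div 2)"
  shows "{\<phi> :: 'k::field_char_0^3 \<Rightarrow> 'k^3. \<phi> \<in> tame \<and>
           (\<forall>i. l \<le> i \<and> i \<le> m \<longrightarrow> act \<phi> (gamma n i) = (gamma n i :: ('k^3 \<Rightarrow> 'k) list set))}
    \<subseteq> (\<lambda>(c, e). inv (P \<circ> diag3 (c * e) c e \<circ> inv P)) ` ({1, -1} \<times> {1, -1})"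
proof
  fix \<phi> :: "'k^3 \<Rightarrow> 'k^3"
  assume "\<phi> \<in> {\<phi>. \<phi> \<in> tame \<and> (\<forall>i. l \<le> i \<and> i \<le> m \<longrightarrow> act \<phi> (gamma n i) = gamma n i)}"
  then have "\<phi> \<in> tame" and fixed: "\<And>i. l \<le> i \<Longrightarrow> i \<le> m \<Longrightarrow> act \<phi> (gamma n i) = gamma n i"
    by auto
  define \<psi> where "\<psi> = inv P \<circ> inv \<phi> \<circ> P"
  have "P \<in> tame"
    unfolding P_def fpow_eq_ipow by (intro ipow_tame fmap_tame)
  then have "polymap \<psi>"
    unfolding \<psi>_def using \<open>\<phi> \<in> tame\<close> by (intro tame_polymap tame.comp tame.inverse)
  moreover have "\<exists>\<alpha> \<beta>. \<alpha> \<noteq> 0 \<and> (\<forall>y. (finv n ^^ k) (\<psi> y) $ 1 = \<alpha> * (finv n ^^ k) y $ 1 + \<beta>)"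
    if "k < 4" for k :: nat
  proof -
    have "l \<le> 2 * ((l + 1) div 2)" "2 * ((l + 1) div 2) \<le> l + 1" "0 \<le> int k" "int k \<le> 3"
      using that by presburger+
    then have "act \<phi> (gamma n (2 * ((l + 1) div 2 + int k))) = gamma n (2 * ((l + 1) div 2 + int k))"
      using assms(3) by (intro fixed) presburger+
    then show ?thesis
      unfolding \<psi>_def P_def by (rule conjugate_fixing_even_vertex)
  qed
  ultimately obtain c e where "c \<in> {1, -1}" "e \<in> {1, -1}" and \<psi>: "\<psi> = diag3 (c * e) c e"
    using stabiliser_of_four_vertices[OF assms(1,2)] by meson
  have "P \<circ> \<psi> \<circ> inv P = (P \<circ> inv P) \<circ> inv \<phi> \<circ> (P \<circ> inv P)"
    unfolding \<psi>_def by (simp add: comp_assoc)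
  also have "P \<circ> inv P = id"
    unfolding P_def by (rule surj_iff[THEN iffD1, OF bij_is_surj[OF fpow_bij]])
  finally have "P \<circ> \<psi> \<circ> inv P = inv \<phi>"
    by (simp add: comp_def)
  then have "\<phi> = inv (P \<circ> \<psi> \<circ> inv P)"
    using inv_inv_eq[OF tame_bij[OF \<open>\<phi> \<in> tame\<close>]] by simp
  with \<psi> \<open>c \<in> {1, -1}\<close> \<open>e \<in> {1, -1}\<close>
  show "\<phi> \<in> (\<lambda>(c, e). inv (P \<circ> diag3 (c * e) c e \<circ> inv P)) ` ({1, -1} \<times> {1, -1})"
    by (intro image_eqI[of _ _ "(c, e)"]) auto
qed

theorem lemma7p11:
  fixes n :: nat and l m :: int
  assumes "n \<ge> 2" and "even n" and "l < m" and "m - l \<ge> 7"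
  shows "finite {\<phi> :: 'k::field_char_0^3 \<Rightarrow> 'k^3. \<phi> \<in> tame \<and>
           (\<forall>i. l \<le> i \<and> i \<le> m \<longrightarrow> act \<phi> (gamma n i) = (gamma n i :: ('k^3 \<Rightarrow> 'k) list set))}"
  by (rule finite_subset[OF segment_stabiliser_subset[OF assms(1,2,4)]]) simp

end
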